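(* (a) For every $n\ge0$, all roots of $K_n$ are real and lie in $(0,4)$. (b) For every $n\ge3$, all roots of $\mathcal{K}_n$ are real and lie in $[0,4)$; $0$ is a root of multiplicity exactly $\lfloor (n+1)/2\rfloor$, and the remaining $\lfloor n/2\rfloor$ roots are nonzero and simple.
   Context: $K_n(\lambda)$ is defined by $K_0=2$, $K_1=1$, $K_2=\lambda-2$, $K_3=\lambda-3$, $K_{2p+1}=(\lambda-2)K_{2p-1}-K_{2p-3}$, $K_{2p}=(\lambda-2)K_{2p-2}-K_{2p-4}$ ($p\ge2$). $\mathcal{K}_n(\lambda)=\det(\lambda I_n-M_n)$ where $M_n$ is the $n\times n$ matrix with $(M_n)_{j,i}=1$ if $i\ge j-1$ or $(j,i)=(n,n-2)$, and $0$ otherwise. *)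

theory Defs
  imports Complex_Main "Jordan_Normal_Form.Char_Poly"
begin

text \<open>K_0 = 2, K_1 = 1, K_2 = lambda - 2, K_3 = lambda - 3,
  K_m = (lambda - 2) K_(m-2) - K_(m-4) for m >= 4
  (this is exactly the two recurrences for K_(2p+1), K_(2p), p >= 2).\<close>
fun Kpoly :: "nat \<Rightarrow> real poly" where
  "Kpoly 0 = [:2:]"
| "Kpoly (Suc 0) = [:1:]"
| "Kpoly (Suc (Suc 0)) = [:-2, 1:]"
| "Kpoly (Suc (Suc (Suc 0))) = [:-3, 1:]"
| "Kpoly (Suc (Suc (Suc (Suc n)))) = [:-2, 1:] * Kpoly (Suc (Suc n)) - Kpoly n"

text \<open>The n x n matrix M_n, with 0-based indices: the paper's entry (j,i)
  (1-based) is entry (j-1,i-1) here. (M_n)_{j,i} = 1 iff i >= j-1 or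
  (j,i) = (n,n-2); in 0-based indices: i+1 >= j or (j,i) = (n-1,n-3).\<close>
definition Mmat :: "nat \<Rightarrow> real mat" where
  "Mmat n = mat n n (\<lambda>(j, i). if j \<le> i + 1 \<or> (j = n - 1 \<and> i = n - 3) then 1 else 0)"

definition calKpoly :: "nat \<Rightarrow> real poly" where
  "calKpoly n = char_poly (Mmat n)"

end

theory Submission
  imports Defs
begin

text \<open>Substituting \<open>\<lambda> = 4 cos\<^sup>2 t\<close> turns the recurrence of \<open>K\<^sub>n\<close> into the one of
  \<open>2 cos (n t)\<close> (up to the factor \<open>2 cos t\<close> for odd \<open>n\<close>). Hence the \<open>\<lfloor>n/2\<rfloor>\<close> distinct numbers
  \<open>4 cos\<^sup>2 ((2k+1)\<pi>/(2n))\<close> in \<open>(0,4)\<close> are roots of \<open>K\<^sub>n\<close>, which has degree \<open>\<lfloor>n/2\<rfloor>\<close>; so they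
  are all of its roots and all are simple. Expanding \<open>det (\<lambda>I - M\<^sub>n)\<close> along the first column
  gives the recurrence \<open>\<K>\<^sub>n\<^sub>+\<^sub>2 = \<lambda> (\<K>\<^sub>n\<^sub>+\<^sub>1 - \<K>\<^sub>n)\<close>, which \<open>\<lambda>\<^bsup>\<lceil>n/2\<rceil>\<^esup> K\<^sub>n\<close> satisfies as well;
  thus \<open>\<K>\<^sub>n = \<lambda>\<^bsup>\<lceil>n/2\<rceil>\<^esup> K\<^sub>n\<close> for \<open>n \<ge> 3\<close>, and (b) follows from (a).\<close>

lemma proots_eq_mset_set:
  fixes p :: "'a::idom poly"
  assumes "p \<noteq> 0" "finite S" "S \<subseteq> {x. poly p x = 0}" "degree p \<le> card S"
  shows "proots p = mset_set S"
proof -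
  have sub: "mset_set S \<subseteq># proots p"
  proof (rule mset_subset_eqI)
    fix x
    show "count (mset_set S) x \<le> count (proots p) x"
    proof (cases "x \<in> S")
      case True
      then have "0 < order x p" using assms(1,3) by (auto simp: order_gt_0_iff)
      then show ?thesis using True assms(1,2) by simp
    qed simp
  qed
  have size: "size (proots p) \<le> size (mset_set S)"
    using size_proots_le[of p] assms(4) by simp
  show ?thesis
  proof (rule ccontr)
    assume "proots p \<noteq> mset_set S"
    with sub have "mset_set S \<subset># proots p" by (simp add: subset_mset.less_le)
    then have "size (mset_set S) < size (proots p)" by (rule mset_subset_size)
    with size show False by simp
  qed
qed

lemma det_2x2:
  fixes A :: "'a :: comm_ring_1 mat"
  assumes A: "A \<in> carrier_mat 2 2"
  shows "det A = A $$ (0, 0) * A $$ (1, 1) - A $$ (1, 0) * A $$ (0, 1)"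
proof -
  have "det A = A $$ (0, 0) * cofactor A 0 0 + A $$ (1, 0) * cofactor A 1 0"
    using laplace_expansion_column[OF A, of 0] by (simp add: numeral_2_eq_2)
  also have "cofactor A 0 0 = A $$ (1, 1)"
    unfolding cofactor_def using A
    by (subst det_single) (auto simp: mat_delete_def intro!: mat_delete_carrier)
  also have "cofactor A 1 0 = - A $$ (0, 1)"
    unfolding cofactor_def using A
    by (subst det_single) (auto simp: mat_delete_def intro!: mat_delete_carrier)
  finally show ?thesis by simp
qed

lemma Kpoly_add4: "Kpoly (m + 4) = [:-2, 1:] * Kpoly (m + 2) - Kpoly m"
  by (simp add: eval_nat_numeral)

text \<open>The recurrence is used only through \<open>Kpoly_add4\<close>; left in the simpset it unfolds every
  \<open>Kpoly\<close> applied to a \<open>Suc\<close>-tower.\<close>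
declare Kpoly.simps(5) [simp del]

lemma degree_lead_coeff_Kpoly:
  "degree (Kpoly n) = n div 2 \<and> lead_coeff (Kpoly n) = (if n = 0 then 2 else 1)"
proof (induction n rule: Kpoly.induct)
  case (5 n)
  let ?q = "Kpoly (Suc (Suc n))" and ?p = "[:-2, 1:] * Kpoly (Suc (Suc n))"
  have q: "degree ?q = n div 2 + 1" "lead_coeff ?q = 1" using "5.IH"(1) by auto
  then have "?q \<noteq> 0" by auto
  then have p: "degree ?p = n div 2 + 2" "lead_coeff ?p = 1"
    using q degree_mult_eq[of "[:-2, 1:]" ?q] unfolding lead_coeff_mult by simp_all
  have lt: "degree (- Kpoly n) < degree ?p" using "5.IH"(2) p by simp
  have "Kpoly (Suc (Suc (Suc (Suc n)))) = - Kpoly n + ?p" by (simp add: Kpoly.simps(5))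
  then show ?case
    using p degree_add_eq_right[OF lt] lead_coeff_add_le[OF lt] by simp
qed auto

lemma Kpoly_neq_0: "Kpoly n \<noteq> 0"
  using degree_lead_coeff_Kpoly[of n] by (metis leading_coeff_0_iff zero_neq_numeral zero_neq_one)

lemma poly_Kpoly_cos:
  "poly (Kpoly n) (4 * cos t ^ 2) * (if even n then 1 else 2 * cos t) = 2 * cos (real n * t)"
proof (induction n rule: Kpoly.induct)
  case 3
  show ?case using cos_double_cos[of t] by simp
next
  case 4
  have "Kpoly 3 = [:-3, 1:]" by (simp add: numeral_3_eq_3)
  then show ?case
    using cos_treble_cos[of t]
    by (simp add: numeral_3_eq_3[symmetric] algebra_simps power2_eq_square power3_eq_cube)
next
  case (5 n)
  let ?w = "if even n then 1 else 2 * cos t"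
  have a: "cos (real (Suc (Suc (Suc (Suc n)))) * t) = cos (real (Suc (Suc n)) * t + 2 * t)"
   and b: "cos (real n * t) = cos (real (Suc (Suc n)) * t - 2 * t)"
    by (simp_all add: algebra_simps)
  have "poly (Kpoly (Suc (Suc (Suc (Suc n))))) (4 * cos t ^ 2) * ?w
     = (4 * cos t ^ 2 - 2) * (poly (Kpoly (Suc (Suc n))) (4 * cos t ^ 2) * ?w)
        - poly (Kpoly n) (4 * cos t ^ 2) * ?w"
    by (simp add: Kpoly.simps(5) algebra_simps)
  also have "\<dots> = 2 * cos (2 * t) * (2 * cos (real (Suc (Suc n)) * t)) - 2 * cos (real n * t)"
    using 5 cos_double_cos[of t] by simp
  also have "\<dots> = 2 * cos (real (Suc (Suc (Suc (Suc n)))) * t)"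
    unfolding a b cos_add cos_diff by (simp add: algebra_simps)
  finally show ?case by simp
qed auto

text \<open>\<open>scaledK x m = x\<^bsup>\<lceil>m/2\<rceil>\<^esup> K\<^sub>m(x)\<close> turns out to be \<open>\<K>\<^sub>m(x)\<close> for \<open>m \<ge> 3\<close>.\<close>
definition scaledK :: "real \<Rightarrow> nat \<Rightarrow> real" where
  "scaledK x m = x ^ ((m + 1) div 2) * poly (Kpoly m) x"

lemma scaledK_add4: "scaledK x (m + 4) = x * (x - 2) * scaledK x (m + 2) - x\<^sup>2 * scaledK x m"
proof -
  have "(m + 4 + 1) div 2 = (m + 1) div 2 + 2" "(m + 2 + 1) div 2 = (m + 1) div 2 + 1" by simp_all
  then show ?thesis
    unfolding scaledK_def Kpoly_add4 by (simp add: power_add algebra_simps power2_eq_square)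
qed

lemma scaledK_add2: "scaledK x (m + 2) = x * (scaledK x (m + 1) - scaledK x m)"
proof (induction m rule: less_induct)
  case (less m)
  show ?case
  proof (cases "m < 2")
    case True
    then have "m = 0 \<or> m = 1" by auto
    then show ?thesis
      by (auto simp: scaledK_def numeral_3_eq_3 algebra_simps power2_eq_square)
  next
    case False
    define k where "k = m - 2"
    have m: "m = k + 2" and idx: "k + 1 + 2 = k + 3" "k + 1 + 1 = k + 2" "k + 2 + 1 = k + 3"
      "k + 2 + 2 = k + 4"
      using False by (simp_all add: k_def)
    have s2: "scaledK x (k + 2) = x * (scaledK x (k + 1) - scaledK x k)"
      using less.IH[of k] m by simp
    have s3: "scaledK x (k + 3) = x * (scaledK x (k + 2) - scaledK x (k + 1))"
      using less.IH[of "k + 1"] m unfolding idx by simp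
    have "x * scaledK x (k + 2) = x * (x * (scaledK x (k + 1) - scaledK x k))"
      "x * scaledK x (k + 3) = x * (x * (scaledK x (k + 2) - scaledK x (k + 1)))"
      using s2 s3 by simp_all
    then have "scaledK x (k + 4) = x * (scaledK x (k + 3) - scaledK x (k + 2))"
      using scaledK_add4[of x k] by (simp add: power2_eq_square algebra_simps)
    then show ?thesis unfolding m idx .
  qed
qed

text \<open>\<open>Gmat x m c\<close> is \<open>x I - M\<^sub>m\<close> with the \<open>(0,0)\<close> entry replaced by \<open>c\<close>: deleting row 0 or row 1
  together with column 0 of \<open>Gmat x (m+1) c\<close> leaves \<open>Gmat x m (x-1) = x I - M\<^sub>m\<close> resp.
  \<open>Gmat x m (-1)\<close>, and for \<open>m \<noteq> 2\<close> column 0 has no further nonzero entry.\<close>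
definition Gmat :: "real \<Rightarrow> nat \<Rightarrow> real \<Rightarrow> real mat" where
  "Gmat x m c = mat m m (\<lambda>(j, i). if j = 0 \<and> i = 0 then c
     else (if j = i then x else 0) - (if j \<le> i + 1 \<or> (j = m - 1 \<and> i = m - 3) then 1 else 0))"

lemma Gmat_carrier: "Gmat x m c \<in> carrier_mat m m"
  by (simp add: Gmat_def)

lemma Mmat_carrier: "Mmat n \<in> carrier_mat n n"
  by (simp add: Mmat_def)

lemma char_matrix_Mmat: "- char_matrix (Mmat n) x = Gmat x n (x - 1)"
  by (rule eq_matI) (auto simp: Mmat_def Gmat_def char_matrix_def)

lemma mat_delete_Gmat_0_0: "mat_delete (Gmat x (Suc m) c) 0 0 = Gmat x m (x - 1)"
  by (rule eq_matI) (auto simp: Gmat_def mat_delete_def)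

lemma mat_delete_Gmat_1_0: "1 \<le> m \<Longrightarrow> mat_delete (Gmat x (Suc m) c) 1 0 = Gmat x m (- 1)"
  by (rule eq_matI) (auto simp: Gmat_def mat_delete_def)

lemma det_Gmat_Suc:
  assumes "1 \<le> m" "m \<noteq> 2"
  shows "det (Gmat x (Suc m) c) = c * det (Gmat x m (x - 1)) + det (Gmat x m (- 1))"
proof -
  let ?G = "Gmat x (Suc m) c"
  let ?f = "\<lambda>i. ?G $$ (i, 0) * cofactor ?G i 0"
  obtain k where m: "m = Suc k" using assms by (cases m) auto
  have "det ?G = (\<Sum>i<Suc m. ?f i)"
    by (rule laplace_expansion_column[OF Gmat_carrier]) simp
  also have "\<dots> = ?f 0 + ?f 1 + (\<Sum>i<k. ?f (Suc (Suc i)))"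
    unfolding m sum.lessThan_Suc_shift by simp
  also have "(\<Sum>i<k. ?f (Suc (Suc i))) = 0"
  proof (rule sum.neutral, intro ballI)
    fix i assume "i \<in> {..<k}"
    then have "Suc (Suc i) < Suc m" "\<not> (Suc (Suc i) = Suc m - 1 \<and> 0 = Suc m - 3)"
      using assms m by auto
    then show "?f (Suc (Suc i)) = 0" unfolding Gmat_def by auto
  qed
  also have "?f 0 = c * det (Gmat x m (x - 1))"
    unfolding cofactor_def mat_delete_Gmat_0_0 by (simp add: Gmat_def)
  also have "?f 1 = det (Gmat x m (- 1))"
    unfolding cofactor_def mat_delete_Gmat_1_0[OF assms(1)] using assms by (simp add: Gmat_def)
  finally show ?thesis by simp
qed

lemma det_Gmat_3: "det (Gmat x 3 c) = c * (x\<^sup>2 - 2 * x) - 2 * x"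
proof -
  let ?G = "Gmat x 3 c"
  let ?f = "\<lambda>i. ?G $$ (i, 0) * cofactor ?G i 0"
  have det1: "det (Gmat x 1 c') = c'" for c'
    by (subst det_single) (auto simp: Gmat_def intro: Gmat_carrier)
  have det2: "det (Gmat x 2 c') = c' * (x - 1) - 1" for c'
    using det_Gmat_Suc[of 1 x c'] det1 by (simp add: numeral_2_eq_2)
  have "det ?G = (\<Sum>i<3. ?f i)"
    by (rule laplace_expansion_column[OF Gmat_carrier]) simp
  also have "\<dots> = ?f 0 + ?f 1 + ?f 2"
    by (simp add: numeral_3_eq_3 numeral_2_eq_2)
  also have "?f 0 = c * det (Gmat x 2 (x - 1))"
    using mat_delete_Gmat_0_0[of x 2 c] unfolding cofactor_def by (simp add: Gmat_def numeral_3_eq_3)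
  also have "?f 1 = det (Gmat x 2 (- 1))"
    using mat_delete_Gmat_1_0[of 2 x c] unfolding cofactor_def by (simp add: Gmat_def numeral_3_eq_3)
  also have "?f 2 = - x"
  proof -
    have "mat_delete ?G 2 0 \<in> carrier_mat 2 2"
      using mat_delete_carrier[OF Gmat_carrier[of x 3 c], of 2 0] by simp
    then have "det (mat_delete ?G 2 0) = x"
      by (simp add: det_2x2 mat_delete_def Gmat_def)
    then show ?thesis unfolding cofactor_def by (simp add: Gmat_def)
  qed
  finally show ?thesis unfolding det2 by (simp add: algebra_simps power2_eq_square)
qed

lemma det_Gmat_add2:
  assumes "3 \<le> m"
  shows "det (Gmat x (m + 2) (x - 1)) = x * (det (Gmat x (m + 1) (x - 1)) - det (Gmat x m (x - 1)))"
proof -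
  have "det (Gmat x (Suc m) (- 1)) = det (Gmat x (Suc m) (x - 1)) - x * det (Gmat x m (x - 1))"
    using det_Gmat_Suc[of m x "- 1"] det_Gmat_Suc[of m x "x - 1"] assms by (simp add: algebra_simps)
  then show ?thesis
    using det_Gmat_Suc[of "Suc m" x "x - 1"] assms by (simp add: algebra_simps)
qed

lemma det_Gmat_eq_scaledK:
  assumes "3 \<le> m"
  shows "det (Gmat x m (x - 1)) = scaledK x m"
  using assms
proof (induction m rule: less_induct)
  case (less m)
  show ?case
  proof (cases "m \<le> 4")
    case True
    have K: "poly (Kpoly 3) x = x - 3" "poly (Kpoly 4) x = x\<^sup>2 - 4 * x + 2"
      using Kpoly_add4[of 0] by (simp_all add: numeral_3_eq_3 power2_eq_square algebra_simps)
    have G3: "det (Gmat x 3 (x - 1)) = x\<^sup>2 * (x - 3)" "det (Gmat x 3 (- 1)) = - x\<^sup>2"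
      by (simp_all add: det_Gmat_3 algebra_simps power2_eq_square)
    have "det (Gmat x 4 (x - 1)) = (x - 1) * det (Gmat x 3 (x - 1)) + det (Gmat x 3 (- 1))"
      using det_Gmat_Suc[of 3 x "x - 1"] by (simp add: numeral_3_eq_3 numeral_Bit0)
    then have G4: "det (Gmat x 4 (x - 1)) = x\<^sup>2 * (x\<^sup>2 - 4 * x + 2)"
      unfolding G3 by (simp add: algebra_simps power2_eq_square)
    have "m = 3 \<or> m = 4" using True less.prems by auto
    then show ?thesis
      unfolding scaledK_def using K G3 G4 by auto
  next
    case False
    define j where "j = m - 2"
    have m: "m = j + 2" and j: "3 \<le> j" using False by (simp_all add: j_def)
    have "det (Gmat x m (x - 1)) = x * (det (Gmat x (j + 1) (x - 1)) - det (Gmat x j (x - 1)))"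
      using det_Gmat_add2[OF j] m by simp
    also have "\<dots> = x * (scaledK x (j + 1) - scaledK x j)"
      using less.IH j m by simp
    also have "\<dots> = scaledK x m"
      using scaledK_add2[of x j] m by simp
    finally show ?thesis .
  qed
qed

lemma calKpoly_eq:
  assumes "3 \<le> n"
  shows "calKpoly n = [:0, 1:] ^ ((n + 1) div 2) * Kpoly n"
proof -
  have "poly (calKpoly n) = poly ([:0, 1:] ^ ((n + 1) div 2) * Kpoly n)"
  proof
    fix x
    show "poly (calKpoly n) x = poly ([:0, 1:] ^ ((n + 1) div 2) * Kpoly n) x"
      using det_Gmat_eq_scaledK[OF assms, of x]
      unfolding calKpoly_def char_poly_matrix[OF Mmat_carrier] char_matrix_Mmat
      by (simp add: scaledK_def)
  qed
  then show ?thesis using poly_eq_poly_eq_iff by blast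
qed

definition Kangle :: "nat \<Rightarrow> nat \<Rightarrow> real" where
  "Kangle n k = pi * real (2 * k + 1) / real (2 * n)"

definition Kroot :: "nat \<Rightarrow> nat \<Rightarrow> real" where
  "Kroot n k = 4 * cos (Kangle n k) ^ 2"

lemma Kangle_bounds:
  assumes "k < n div 2"
  shows "0 < Kangle n k" "Kangle n k < pi / 2"
proof -
  have n: "real n > 0" using assms by simp
  have kn: "real (2 * k + 1) < real n" using assms by linarith
  show "0 < Kangle n k" unfolding Kangle_def using n by simp
  have "pi * real (2 * k + 1) < pi * real n" using kn pi_gt_zero by simp
  then show "Kangle n k < pi / 2" unfolding Kangle_def using n by (simp add: field_simps)
qed

lemma cos_Kangle_bounds:
  assumes "k < n div 2"
  shows "0 < cos (Kangle n k)" "cos (Kangle n k) < 1"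
proof -
  show "0 < cos (Kangle n k)" using Kangle_bounds[OF assms] by (intro cos_gt_zero_pi) auto
  have "cos (Kangle n k) < cos 0"
    using Kangle_bounds[OF assms] by (subst cos_mono_less_eq) auto
  then show "cos (Kangle n k) < 1" by simp
qed

lemma Kroot_bounds:
  assumes "k < n div 2"
  shows "0 < Kroot n k" "Kroot n k < 4"
proof -
  have c: "0 < cos (Kangle n k)" "cos (Kangle n k) < 1" using cos_Kangle_bounds[OF assms] by auto
  show "0 < Kroot n k" unfolding Kroot_def using c by simp
  have "cos (Kangle n k) ^ 2 < 1" using c by (simp add: power_less_one_iff abs_less_iff)
  then show "Kroot n k < 4" unfolding Kroot_def by simp
qed

lemma poly_Kpoly_Kroot:
  assumes "k < n div 2"
  shows "poly (Kpoly n) (Kroot n k) = 0"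
proof -
  have n: "real n > 0" using assms by simp
  have "real n * Kangle n k = real_of_int (int k) * pi + pi / 2"
    unfolding Kangle_def using n by (simp add: field_simps)
  then have "cos (real n * Kangle n k) = 0" using cos_zero_iff_int2 by blast
  then have "poly (Kpoly n) (Kroot n k) * (if even n then 1 else 2 * cos (Kangle n k)) = 0"
    using poly_Kpoly_cos[of n "Kangle n k"] unfolding Kroot_def by simp
  moreover have "(if even n then 1 else 2 * cos (Kangle n k)) \<noteq> 0"
    using cos_Kangle_bounds(1)[OF assms] by simp
  ultimately show ?thesis by simp
qed

lemma inj_on_Kroot: "inj_on (Kroot n) {..<n div 2}"
proof
  fix k l assume k: "k \<in> {..<n div 2}" and l: "l \<in> {..<n div 2}" and eq: "Kroot n k = Kroot n l"
  have n: "real n > 0" using k by simp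
  have "cos (Kangle n k) ^ 2 = cos (Kangle n l) ^ 2" using eq unfolding Kroot_def by simp
  then have "cos (Kangle n k) = cos (Kangle n l)"
    using cos_Kangle_bounds(1)[of k n] cos_Kangle_bounds(1)[of l n] k l
    by (simp add: power2_eq_iff_nonneg)
  moreover have "0 \<le> Kangle n k" "Kangle n k \<le> pi" "0 \<le> Kangle n l" "Kangle n l \<le> pi"
    using Kangle_bounds[of k n] Kangle_bounds[of l n] k l pi_gt_zero by auto
  ultimately have "Kangle n k = Kangle n l" using cos_inj_pi by blast
  then have "pi * real (2 * k + 1) = pi * real (2 * l + 1)"
    unfolding Kangle_def using n by (simp only: divide_cancel_right) simp
  then show "k = l" using pi_gt_zero by (simp only: mult_cancel_left) simp
qed

definition Kroots :: "nat \<Rightarrow> complex set" where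
  "Kroots n = complex_of_real ` Kroot n ` {..<n div 2}"

lemma finite_Kroots: "finite (Kroots n)"
  by (simp add: Kroots_def)

lemma card_Kroots: "card (Kroots n) = n div 2"
  unfolding Kroots_def
  by (subst card_image) (auto simp: inj_on_def card_image[OF inj_on_Kroot])

lemma Kroots_bounds: "z \<in> Kroots n \<Longrightarrow> z \<in> \<real> \<and> 0 < Re z \<and> Re z < 4"
  by (auto simp: Kroots_def Kroot_bounds)

interpretation of_real_poly_hom: map_poly_inj_idom_hom complex_of_real ..

lemma proots_Kpoly: "proots (map_poly complex_of_real (Kpoly n)) = mset_set (Kroots n)"
proof (rule proots_eq_mset_set)
  show "map_poly complex_of_real (Kpoly n) \<noteq> 0" by (simp add: Kpoly_neq_0)
  show "finite (Kroots n)" by (rule finite_Kroots)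
  show "Kroots n \<subseteq> {z. poly (map_poly complex_of_real (Kpoly n)) z = 0}"
    by (auto simp: Kroots_def poly_Kpoly_Kroot)
  show "degree (map_poly complex_of_real (Kpoly n)) \<le> card (Kroots n)"
    using degree_lead_coeff_Kpoly[of n] by (simp add: card_Kroots)
qed

lemma roots_Kpoly: "{z. poly (map_poly complex_of_real (Kpoly n)) z = 0} = Kroots n"
  using set_count_proots[of "map_poly complex_of_real (Kpoly n)"]
  by (simp add: proots_Kpoly Kpoly_neq_0 finite_Kroots)

lemma proots_calKpoly:
  assumes "3 \<le> n"
  shows "proots (map_poly complex_of_real (calKpoly n))
    = replicate_mset ((n + 1) div 2) 0 + mset_set (Kroots n)"
proof -
  have "map_poly complex_of_real (calKpoly n)
      = [:0, 1:] ^ ((n + 1) div 2) * map_poly complex_of_real (Kpoly n)"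
    by (simp add: calKpoly_eq[OF assms] of_real_poly_hom.hom_mult of_real_poly_hom.hom_power)
  then show ?thesis
    by (simp add: proots_mult proots_power proots_Kpoly Kpoly_neq_0)
qed

lemma zero_notin_Kroots: "0 \<notin> Kroots n"
  using Kroots_bounds by fastforce

lemma calKpoly_complex_neq_0: "3 \<le> n \<Longrightarrow> map_poly complex_of_real (calKpoly n) \<noteq> 0"
  by (simp add: calKpoly_eq Kpoly_neq_0)

lemma roots_calKpoly:
  assumes "3 \<le> n"
  shows "{z. poly (map_poly complex_of_real (calKpoly n)) z = 0} = insert 0 (Kroots n)"
proof -
  have e: "(n + 1) div 2 \<noteq> 0" using assms by simp
  have "{z. poly (map_poly complex_of_real (calKpoly n)) z = 0}
      = set_mset (proots (map_poly complex_of_real (calKpoly n)))"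
    using calKpoly_complex_neq_0[OF assms] by simp
  also have "\<dots> = set_mset (replicate_mset ((n + 1) div 2) 0) \<union> Kroots n"
    by (simp add: proots_calKpoly[OF assms] finite_Kroots)
  finally show ?thesis using e by simp
qed

lemma order_calKpoly:
  assumes "3 \<le> n"
  shows "order z (map_poly complex_of_real (calKpoly n))
    = (if z = 0 then (n + 1) div 2 else 0) + (if z \<in> Kroots n then 1 else 0)"
proof -
  have "order z (map_poly complex_of_real (calKpoly n))
      = count (proots (map_poly complex_of_real (calKpoly n))) z"
    using calKpoly_complex_neq_0[OF assms] by simp
  also have "\<dots> = count (replicate_mset ((n + 1) div 2) 0) z + count (mset_set (Kroots n)) z"
    by (simp add: proots_calKpoly[OF assms])
  finally show ?thesis by (simp add: finite_Kroots)
qed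

theorem theorem3:
  shows "(\<forall>n. \<forall>z::complex. poly (map_poly complex_of_real (Kpoly n)) z = 0 \<longrightarrow>
            z \<in> \<real> \<and> 0 < Re z \<and> Re z < 4)
       \<and> (\<forall>n\<ge>3.
            (\<forall>z::complex. poly (map_poly complex_of_real (calKpoly n)) z = 0 \<longrightarrow>
               z \<in> \<real> \<and> 0 \<le> Re z \<and> Re z < 4)
          \<and> order 0 (map_poly complex_of_real (calKpoly n)) = (n + 1) div 2
          \<and> card {z::complex. z \<noteq> 0 \<and> poly (map_poly complex_of_real (calKpoly n)) z = 0} = n div 2
          \<and> (\<forall>z::complex. z \<noteq> 0 \<and> poly (map_poly complex_of_real (calKpoly n)) z = 0 \<longrightarrow>
               order z (map_poly complex_of_real (calKpoly n)) = 1))"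
proof -
  let ?C = "\<lambda>n. map_poly complex_of_real (calKpoly n)"
  have part_a: "z \<in> \<real> \<and> 0 < Re z \<and> Re z < 4"
    if "poly (map_poly complex_of_real (Kpoly n)) z = 0" for n z
    using Kroots_bounds roots_Kpoly[of n] that by blast
  have roots: "z \<in> \<real> \<and> 0 \<le> Re z \<and> Re z < 4" if "3 \<le> n" "poly (?C n) z = 0" for n z
  proof -
    have "z = 0 \<or> z \<in> Kroots n" using roots_calKpoly[OF that(1)] that(2) by blast
    then show ?thesis by (auto dest: Kroots_bounds)
  qed
  have order_0: "order 0 (?C n) = (n + 1) div 2" if "3 \<le> n" for n
    using order_calKpoly[OF that, of 0] zero_notin_Kroots by simp
  have card: "card {z. z \<noteq> 0 \<and> poly (?C n) z = 0} = n div 2" if "3 \<le> n" for n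
  proof -
    have "{z. z \<noteq> 0 \<and> poly (?C n) z = 0} = Kroots n"
      using roots_calKpoly[OF that] zero_notin_Kroots by blast
    then show ?thesis by (simp add: card_Kroots)
  qed
  have simple: "order z (?C n) = 1" if "3 \<le> n" "z \<noteq> 0" "poly (?C n) z = 0" for n z
  proof -
    have "z \<in> Kroots n" using roots_calKpoly[OF that(1)] that(2,3) by blast
    then show ?thesis using order_calKpoly[OF that(1), of z] that(2) by simp
  qed
  show ?thesis using part_a roots order_0 card simple by blast
qed

end
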